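(* Let $\mathcal{E}=[\theta,u]$ be an interval effect algebra with an order-determining set of states $\mathcal{S}(\mathcal{E})$. For $a,b\in\mathcal{E}$ and $\beta\in\mathcal{S}(\mathcal{E})$ define $a[\beta]b=\beta(b)a\in\mathcal{E}$. Then for all $a,b,c\in\mathcal{E}$ and $\alpha,\beta\in\mathcal{S}(\mathcal{E})$: (i) the maps $b\mapsto a[\beta]b$ and $a\mapsto a[\beta]b$ preserve convex combinations and are additive (e.g. $a[\beta](b+c)=a[\beta]b+a[\beta]c$ whenever $b+c\le u$, and $(a+c)[\beta]b=a[\beta]b+c[\beta]b$ whenever $a+c\le u$); (ii) $\theta[\beta]b=b[\beta]\theta=\theta$; (iii) $a[\beta]u=a$, $u[\beta]b=\beta(b)u$, and $u[\beta]b=b$ if and only if $b=\lambda u$ for some $\lambda\in[0,1]$; (iv) $a[\beta]b\le a$; (v) $a[\alpha](b[\beta]c)=(a[\alpha]b)[\beta]c$; (vi) $a[\alpha]b=\theta$ does not in general imply $b[\alpha]a=\theta$: there exist such an $\mathcal{E}$, a state $\alpha$, and $a,b\in\mathcal{E}$ with $a[\alpha]b=\theta$ but $b[\alpha]a\ne\theta$.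
   Context: Let $V$ be a real vector space with zero $\theta$ and $K\subseteq V$ a positive cone ($\mathbb{R}^+K\subseteq K$, $K+K\subseteq K$, $K\cap(-K)=\{\theta\}$), ordered by $x\le y$ iff $y-x\in K$. For $u\in K$, $u\ne\theta$, the interval effect algebra is $\mathcal{E}=[\theta,u]=\{x\in K:x\le u\}$; $a\perp b$ means $a+b\le u$. A state is $s\colon\mathcal{E}\to[0,1]$ with $s(u)=1$ and $s(a+b)=s(a)+s(b)$ when $a\perp b$; $\mathcal{S}(\mathcal{E})$ is the set of all states, assumed order-determining ($a\le b$ iff $s(a)\le s(b)$ for all states $s$). *)

theory Defs
  imports "HOL-Analysis.Analysis"
begin

definition positive_cone :: "'v::real_vector set \<Rightarrow> bool" where
  "positive_cone K \<longleftrightarrow>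
     (\<forall>r::real. \<forall>x\<in>K. 0 < r \<longrightarrow> r *\<^sub>R x \<in> K) \<and>
     (\<forall>x\<in>K. \<forall>y\<in>K. x + y \<in> K) \<and>
     K \<inter> uminus ` K = {0}"

definition cone_le :: "'v::real_vector set \<Rightarrow> 'v \<Rightarrow> 'v \<Rightarrow> bool" where
  "cone_le K x y \<longleftrightarrow> y - x \<in> K"

definition interval_ea :: "'v::real_vector set \<Rightarrow> 'v \<Rightarrow> 'v set" where
  "interval_ea K u = {x \<in> K. cone_le K x u}"

text \<open>A state on the interval effect algebra [0,u]; only its values on [0,u] matter.\<close>
definition is_state :: "'v::real_vector set \<Rightarrow> 'v \<Rightarrow> ('v \<Rightarrow> real) \<Rightarrow> bool" where
  "is_state K u s \<longleftrightarrow>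
     (\<forall>a\<in>interval_ea K u. 0 \<le> s a \<and> s a \<le> 1) \<and>
     s u = 1 \<and>
     (\<forall>a\<in>interval_ea K u. \<forall>b\<in>interval_ea K u.
        cone_le K (a + b) u \<longrightarrow> s (a + b) = s a + s b)"

definition order_determining :: "'v::real_vector set \<Rightarrow> 'v \<Rightarrow> bool" where
  "order_determining K u \<longleftrightarrow>
     (\<forall>a\<in>interval_ea K u. \<forall>b\<in>interval_ea K u.
        cone_le K a b \<longleftrightarrow> (\<forall>s. is_state K u s \<longrightarrow> s a \<le> s b))"

definition seqop :: "('v::real_vector \<Rightarrow> real) \<Rightarrow> 'v \<Rightarrow> 'v \<Rightarrow> 'v" where
  "seqop \<beta> a b = \<beta> b *\<^sub>R a"

end

theory Submission
  imports Defs
begin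

text \<open>
  Everything except the associativity law and the convexity in the right argument is linear
  algebra in the definition a[\<beta>]b = \<beta>(b) a. Those two need that a state is homogeneous,
  \<beta>(r x) = r \<beta>(x) for 0 \<le> r \<le> 1, which is not among the axioms: additivity gives it for
  rational r = k/m, and monotonicity of states squeezes s(r x) between the values at
  the neighbouring rationals k/m \<le> r \<le> (k+1)/m.
  For the counterexample take the positive quadrant of the plane with unit (1,1), the first
  coordinate as state, a = (1,0) and b = (0,1): then a[\<alpha>]b = 0 a = 0 but b[\<alpha>]a = 1 b = b.
\<close>

lemma positive_cone_zero: "positive_cone K \<Longrightarrow> 0 \<in> K"
  unfolding positive_cone_def by blast

lemma positive_cone_scaleR:
  "positive_cone K \<Longrightarrow> x \<in> K \<Longrightarrow> 0 \<le> r \<Longrightarrow> r *\<^sub>R x \<in> K"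
  using positive_cone_zero[of K] unfolding positive_cone_def
  by (cases "r = 0") auto

lemma positive_cone_add: "positive_cone K \<Longrightarrow> x \<in> K \<Longrightarrow> y \<in> K \<Longrightarrow> x + y \<in> K"
  unfolding positive_cone_def by blast

lemma cone_le_scaleR_left_mono:
  assumes "positive_cone K" "x \<in> K" "p \<le> q"
  shows "cone_le K (p *\<^sub>R x) (q *\<^sub>R x)"
  using positive_cone_scaleR[OF assms(1,2), of "q - p"] assms(3)
  unfolding cone_le_def by (simp add: scaleR_diff_left)

lemma interval_ea_iff: "x \<in> interval_ea K u \<longleftrightarrow> x \<in> K \<and> u - x \<in> K"
  unfolding interval_ea_def cone_le_def by auto

lemma interval_ea_unit_in_cone:
  assumes "positive_cone K" "x \<in> interval_ea K u"
  shows "u \<in> K"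
proof -
  have "(u - x) + x \<in> K"
    using assms positive_cone_add[OF assms(1), of "u - x" x] by (simp add: interval_ea_iff)
  then show ?thesis by simp
qed

lemma interval_ea_top: "positive_cone K \<Longrightarrow> u \<in> K \<Longrightarrow> u \<in> interval_ea K u"
  using positive_cone_zero by (auto simp: interval_ea_iff)

lemma interval_ea_zero: "positive_cone K \<Longrightarrow> u \<in> K \<Longrightarrow> 0 \<in> interval_ea K u"
  using positive_cone_zero by (auto simp: interval_ea_iff)

lemma interval_ea_convex:
  assumes "positive_cone K" "x \<in> interval_ea K u" "y \<in> interval_ea K u" "0 \<le> l" "l \<le> 1"
  shows "l *\<^sub>R x + (1 - l) *\<^sub>R y \<in> interval_ea K u"
proof -
  have "u - (l *\<^sub>R x + (1 - l) *\<^sub>R y) = l *\<^sub>R (u - x) + (1 - l) *\<^sub>R (u - y)"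
    by (simp add: algebra_simps)
  with assms show ?thesis
    by (auto simp: interval_ea_iff intro!: positive_cone_add positive_cone_scaleR)
qed

lemma interval_ea_scaleR:
  assumes "positive_cone K" "u \<in> K" "x \<in> interval_ea K u" "0 \<le> r" "r \<le> 1"
  shows "r *\<^sub>R x \<in> interval_ea K u"
  using interval_ea_convex[OF assms(1,3) interval_ea_zero[OF assms(1,2)] assms(4,5)] by simp

lemma interval_ea_diff:
  assumes "positive_cone K" "x \<in> interval_ea K u" "y \<in> interval_ea K u" "cone_le K x y"
  shows "y - x \<in> interval_ea K u"
proof -
  have "(u - y) + x \<in> K"
    using assms positive_cone_add[OF assms(1), of "u - y" x] by (simp add: interval_ea_iff)
  moreover have "u - (y - x) = (u - y) + x" by simp
  ultimately have "u - (y - x) \<in> K" by metis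
  with assms(4) show ?thesis by (simp add: interval_ea_iff cone_le_def)
qed

lemma state_bounds:
  "is_state K u s \<Longrightarrow> x \<in> interval_ea K u \<Longrightarrow> 0 \<le> s x \<and> s x \<le> 1"
  unfolding is_state_def by blast

lemma state_unit: "is_state K u s \<Longrightarrow> s u = 1"
  unfolding is_state_def by blast

lemma state_add:
  assumes "is_state K u s" "x \<in> interval_ea K u" "y \<in> interval_ea K u"
    "x + y \<in> interval_ea K u"
  shows "s (x + y) = s x + s y"
  using assms unfolding is_state_def interval_ea_def by blast

lemma state_zero:
  assumes "positive_cone K" "u \<in> K" "is_state K u s"
  shows "s 0 = 0"
  using state_add[OF assms(3), of 0 0] interval_ea_zero[OF assms(1,2)] by simp

lemma state_mono:
  assumes "positive_cone K" "is_state K u s" "x \<in> interval_ea K u" "y \<in> interval_ea K u"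
    "cone_le K x y"
  shows "s x \<le> s y"
proof -
  have d: "y - x \<in> interval_ea K u" using interval_ea_diff assms by blast
  have "s y = s x + s (y - x)" using state_add[OF assms(2,3) d] assms(4) by simp
  with state_bounds[OF assms(2) d] show ?thesis by simp
qed

lemma state_scaleR_of_nat:
  assumes "positive_cone K" "is_state K u s" "y \<in> K" "real k *\<^sub>R y \<in> interval_ea K u"
  shows "s (real k *\<^sub>R y) = real k * s y"
  using assms(4)
proof (induction k)
  case 0
  then have "u \<in> K" by (simp add: interval_ea_iff)
  then show ?case using state_zero[OF assms(1) _ assms(2)] by simp
next
  case (Suc k)
  have split: "real (Suc k) *\<^sub>R y = real k *\<^sub>R y + y" by (simp add: algebra_simps)
  have ky: "real k *\<^sub>R y \<in> K" using positive_cone_scaleR[OF assms(1,3)] by simp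
  have rest: "u - real (Suc k) *\<^sub>R y \<in> K" using Suc.prems by (simp add: interval_ea_iff)
  have "u - real k *\<^sub>R y = (u - real (Suc k) *\<^sub>R y) + y"
       "u - y = (u - real (Suc k) *\<^sub>R y) + real k *\<^sub>R y"
    by (simp_all add: algebra_simps)
  then have "u - real k *\<^sub>R y \<in> K" "u - y \<in> K"
    using positive_cone_add[OF assms(1) rest] assms(3) ky by metis+
  then have "real k *\<^sub>R y \<in> interval_ea K u" "y \<in> interval_ea K u"
    using assms(3) ky by (simp_all add: interval_ea_iff)
  with Suc show ?case
    using state_add[OF assms(2)] split by (simp add: algebra_simps)
qed

lemma state_scaleR_frac:
  assumes "positive_cone K" "is_state K u s" "x \<in> interval_ea K u" "0 < m" "k \<le> m"
  shows "s ((real k / real m) *\<^sub>R x) = (real k / real m) * s x"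
proof -
  have uK: "u \<in> K" using interval_ea_unit_in_cone[OF assms(1,3)] .
  have xK: "x \<in> K" using assms(3) by (simp add: interval_ea_iff)
  define y where "y = (1 / real m) *\<^sub>R x"
  have yK: "y \<in> K" unfolding y_def using positive_cone_scaleR[OF assms(1) xK] by simp
  have "real m *\<^sub>R y = x" "real k *\<^sub>R y = (real k / real m) *\<^sub>R x"
    using assms(4) by (simp_all add: y_def)
  moreover have "(real k / real m) *\<^sub>R x \<in> interval_ea K u"
    using interval_ea_scaleR[OF assms(1) uK assms(3)] assms(4,5) by simp
  ultimately have "s x = real m * s y" "s ((real k / real m) *\<^sub>R x) = real k * s y"
    using state_scaleR_of_nat[OF assms(1,2) yK] assms(3) by metis+
  then show ?thesis using assms(4) by simp
qed

lemma state_scaleR_approx: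
  assumes "positive_cone K" "is_state K u s" "x \<in> interval_ea K u" "0 \<le> r" "r < 1" "0 < m"
  shows "\<bar>s (r *\<^sub>R x) - r * s x\<bar> \<le> 1 / real m"
proof -
  have uK: "u \<in> K" using interval_ea_unit_in_cone[OF assms(1,3)] .
  have xK: "x \<in> K" using assms(3) by (simp add: interval_ea_iff)
  define k where "k = nat \<lfloor>r * real m\<rfloor>"
  have "real k = of_int \<lfloor>r * real m\<rfloor>" unfolding k_def using assms(4) by simp
  then have k_floor: "real k \<le> r * real m" "r * real m < real k + 1"
    using floor_correct[of "r * real m"] by linarith+
  have "r * real m < 1 * real m" using assms(5,6) by (intro mult_strict_right_mono) simp_all
  then have "real k < real m" using k_floor(1) by simp
  then have k: "real k / real m \<le> r" "r \<le> real (Suc k) / real m" "Suc k \<le> m"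
    using k_floor assms(6) by (simp_all add: field_simps)
  have mem: "t *\<^sub>R x \<in> interval_ea K u" if "0 \<le> t" "t \<le> 1" for t
    using interval_ea_scaleR[OF assms(1) uK assms(3) that] .
  have k_le: "real k / real m \<le> 1" and Suc_k_le: "real (Suc k) / real m \<le> 1"
    using k(3) by (simp_all del: of_nat_Suc)
  have "s ((real k / real m) *\<^sub>R x) \<le> s (r *\<^sub>R x)"
    using state_mono[OF assms(1,2) mem mem cone_le_scaleR_left_mono[OF assms(1) xK k(1)]]
      k_le assms(4,5) by simp
  then have lower: "real k / real m * s x \<le> s (r *\<^sub>R x)"
    using state_scaleR_frac[OF assms(1-3,6)] k(3) by simp
  have "s (r *\<^sub>R x) \<le> s ((real (Suc k) / real m) *\<^sub>R x)"
    using state_mono[OF assms(1,2) mem mem cone_le_scaleR_left_mono[OF assms(1) xK k(2)]]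
      Suc_k_le assms(4,5) by simp
  then have upper: "s (r *\<^sub>R x) \<le> real (Suc k) / real m * s x"
    using state_scaleR_frac[OF assms(1-3,6) k(3)] by simp
  have sx: "0 \<le> s x" "s x \<le> 1" using state_bounds[OF assms(2,3)] by auto
  have "real k / real m * s x \<le> r * s x" by (rule mult_right_mono[OF k(1) sx(1)])
  moreover have "r * s x \<le> real (Suc k) / real m * s x" by (rule mult_right_mono[OF k(2) sx(1)])
  moreover have "real (Suc k) / real m * s x - real k / real m * s x = s x / real m"
    using assms(6) by (simp add: field_simps)
  moreover have "s x / real m \<le> 1 / real m" using sx(2) by (simp add: divide_right_mono)
  ultimately show ?thesis using lower upper by linarith
qed

lemma state_scaleR:
  assumes "positive_cone K" "is_state K u s" "x \<in> interval_ea K u" "0 \<le> r" "r \<le> 1"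
  shows "s (r *\<^sub>R x) = r * s x"
proof (cases "r = 1")
  case False
  then have "r < 1" using assms(5) by simp
  show ?thesis
  proof (rule ccontr)
    assume "s (r *\<^sub>R x) \<noteq> r * s x"
    then obtain m where m: "0 < m" "inverse (real m) < \<bar>s (r *\<^sub>R x) - r * s x\<bar>"
      using ex_inverse_of_nat_less[of "\<bar>s (r *\<^sub>R x) - r * s x\<bar>"] by auto
    moreover have "\<bar>s (r *\<^sub>R x) - r * s x\<bar> \<le> 1 / real m"
      by (rule state_scaleR_approx[OF assms(1-4) \<open>r < 1\<close> m(1)])
    ultimately show False by (simp add: inverse_eq_divide)
  qed
qed simp

lemma state_convex:
  assumes "positive_cone K" "is_state K u s" "x \<in> interval_ea K u" "y \<in> interval_ea K u"
    "0 \<le> l" "l \<le> 1"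
  shows "s (l *\<^sub>R x + (1 - l) *\<^sub>R y) = l * s x + (1 - l) * s y"
proof -
  have uK: "u \<in> K" using interval_ea_unit_in_cone[OF assms(1,3)] .
  have "l *\<^sub>R x \<in> interval_ea K u" "(1 - l) *\<^sub>R y \<in> interval_ea K u"
    using interval_ea_scaleR[OF assms(1) uK] assms by simp_all
  moreover have "l *\<^sub>R x + (1 - l) *\<^sub>R y \<in> interval_ea K u"
    using interval_ea_convex[OF assms(1,3,4,5,6)] .
  ultimately have "s (l *\<^sub>R x + (1 - l) *\<^sub>R y) = s (l *\<^sub>R x) + s ((1 - l) *\<^sub>R y)"
    by (rule state_add[OF assms(2)])
  also have "\<dots> = l * s x + (1 - l) * s y"
    using state_scaleR[OF assms(1,2)] assms by simp
  finally show ?thesis .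
qed

lemma seqop_in_interval_ea:
  assumes "positive_cone K" "is_state K u \<beta>" "a \<in> interval_ea K u" "b \<in> interval_ea K u"
  shows "seqop \<beta> a b \<in> interval_ea K u"
  unfolding seqop_def
  using interval_ea_scaleR[OF assms(1) interval_ea_unit_in_cone[OF assms(1,3)] assms(3)]
    state_bounds[OF assms(2,4)] by simp

lemma seqop_add_left: "seqop \<beta> (a + c) b = seqop \<beta> a b + seqop \<beta> c b"
  unfolding seqop_def by (simp add: scaleR_add_right)

lemma seqop_scaleR_left: "seqop \<beta> (r *\<^sub>R a) b = r *\<^sub>R seqop \<beta> a b"
  unfolding seqop_def by simp

lemma seqop_add_right:
  assumes "is_state K u \<beta>" "b \<in> interval_ea K u" "c \<in> interval_ea K u" "cone_le K (b + c) u"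
  shows "seqop \<beta> a (b + c) = seqop \<beta> a b + seqop \<beta> a c"
  using assms unfolding is_state_def seqop_def by (simp add: scaleR_add_left)

lemma seqop_convex_right:
  assumes "positive_cone K" "is_state K u \<beta>" "b \<in> interval_ea K u" "c \<in> interval_ea K u"
    "0 \<le> l" "l \<le> 1"
  shows "seqop \<beta> a (l *\<^sub>R b + (1 - l) *\<^sub>R c) = l *\<^sub>R seqop \<beta> a b + (1 - l) *\<^sub>R seqop \<beta> a c"
  unfolding seqop_def using state_convex[OF assms] by (simp add: scaleR_add_left)

lemma seqop_zero_left: "seqop \<beta> 0 b = 0"
  unfolding seqop_def by simp

lemma seqop_zero_right:
  assumes "positive_cone K" "u \<in> K" "is_state K u \<beta>"
  shows "seqop \<beta> a 0 = 0"
  unfolding seqop_def using state_zero[OF assms] by simp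

lemma seqop_unit_right: "is_state K u \<beta> \<Longrightarrow> seqop \<beta> a u = a"
  unfolding seqop_def by (simp add: state_unit)

lemma seqop_unit_left: "seqop \<beta> u b = \<beta> b *\<^sub>R u"
  unfolding seqop_def ..

lemma seqop_unit_left_eq_iff:
  assumes "positive_cone K" "u \<in> K" "is_state K u \<beta>" "b \<in> interval_ea K u"
  shows "seqop \<beta> u b = b \<longleftrightarrow> (\<exists>l::real. 0 \<le> l \<and> l \<le> 1 \<and> b = l *\<^sub>R u)"
proof
  assume "seqop \<beta> u b = b"
  then show "\<exists>l::real. 0 \<le> l \<and> l \<le> 1 \<and> b = l *\<^sub>R u"
    using state_bounds[OF assms(3,4)] unfolding seqop_def by metis
next
  assume "\<exists>l::real. 0 \<le> l \<and> l \<le> 1 \<and> b = l *\<^sub>R u"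
  then obtain l where "0 \<le> l" "l \<le> 1" "b = l *\<^sub>R u" by blast
  then show "seqop \<beta> u b = b"
    using state_scaleR[OF assms(1,3) interval_ea_top[OF assms(1,2)]] state_unit[OF assms(3)]
    unfolding seqop_def by simp
qed

lemma seqop_cone_le_left:
  assumes "positive_cone K" "is_state K u \<beta>" "a \<in> interval_ea K u" "b \<in> interval_ea K u"
  shows "cone_le K (seqop \<beta> a b) a"
  using cone_le_scaleR_left_mono[OF assms(1), of a "\<beta> b" 1] assms(3) state_bounds[OF assms(2,4)]
  unfolding seqop_def by (simp add: interval_ea_iff)

lemma seqop_assoc:
  assumes "positive_cone K" "is_state K u \<alpha>" "is_state K u \<beta>"
    "b \<in> interval_ea K u" "c \<in> interval_ea K u"
  shows "seqop \<alpha> a (seqop \<beta> b c) = seqop \<beta> (seqop \<alpha> a b) c"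
  unfolding seqop_def using state_scaleR[OF assms(1,2,4)] state_bounds[OF assms(3,5)] by simp

definition nonneg_quadrant :: "(real \<times> real) set" where
  "nonneg_quadrant = {p. 0 \<le> fst p \<and> 0 \<le> snd p}"

lemma positive_cone_nonneg_quadrant: "positive_cone nonneg_quadrant"
  unfolding positive_cone_def nonneg_quadrant_def
proof (intro conjI ballI allI impI equalityI subsetI)
  fix p :: "real \<times> real"
  assume "p \<in> {p. 0 \<le> fst p \<and> 0 \<le> snd p} \<inter> uminus ` {p. 0 \<le> fst p \<and> 0 \<le> snd p}"
  then show "p \<in> {0}" by (auto simp: prod_eq_iff)
qed (auto intro: image_eqI[where x = 0])

lemma interval_ea_nonneg_quadrant_iff:
  "p \<in> interval_ea nonneg_quadrant (1, 1) \<longleftrightarrow> 0 \<le> fst p \<and> fst p \<le> 1 \<and> 0 \<le> snd p \<and> snd p \<le> 1"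
  unfolding interval_ea_iff nonneg_quadrant_def by auto

lemma is_state_nonneg_quadrant_fst: "is_state nonneg_quadrant (1, 1) fst"
  unfolding is_state_def by (auto simp: interval_ea_nonneg_quadrant_iff)

lemma is_state_nonneg_quadrant_snd: "is_state nonneg_quadrant (1, 1) snd"
  unfolding is_state_def by (auto simp: interval_ea_nonneg_quadrant_iff)

lemma order_determining_nonneg_quadrant: "order_determining nonneg_quadrant (1, 1)"
  unfolding order_determining_def
proof (intro ballI iffI allI impI)
  fix a b s
  assume "a \<in> interval_ea nonneg_quadrant (1, 1)" "b \<in> interval_ea nonneg_quadrant (1, 1)"
    "cone_le nonneg_quadrant a b" "is_state nonneg_quadrant (1, 1) s"
  then show "s a \<le> s b" using state_mono[OF positive_cone_nonneg_quadrant] by blast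
next
  fix a b :: "real \<times> real"
  assume "\<forall>s. is_state nonneg_quadrant (1, 1) s \<longrightarrow> s a \<le> s b"
  then have "fst a \<le> fst b" "snd a \<le> snd b"
    using is_state_nonneg_quadrant_fst is_state_nonneg_quadrant_snd by auto
  then show "cone_le nonneg_quadrant a b" unfolding cone_le_def nonneg_quadrant_def by simp
qed

lemma seqop_eq_zero_not_symmetric:
  "\<exists>(K::(real \<times> real) set) u \<alpha> a b.
     positive_cone K \<and> u \<in> K \<and> u \<noteq> 0 \<and> order_determining K u \<and>
     is_state K u \<alpha> \<and> a \<in> interval_ea K u \<and> b \<in> interval_ea K u \<and>
     seqop \<alpha> a b = 0 \<and> seqop \<alpha> b a \<noteq> 0"
proof (intro exI conjI)
  show "positive_cone nonneg_quadrant" by (rule positive_cone_nonneg_quadrant)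
  show "order_determining nonneg_quadrant (1, 1)" by (rule order_determining_nonneg_quadrant)
  show "is_state nonneg_quadrant (1, 1) fst" by (rule is_state_nonneg_quadrant_fst)
  show "(1, 1) \<in> nonneg_quadrant" "((1, 1) :: real \<times> real) \<noteq> 0"
    by (simp_all add: nonneg_quadrant_def zero_prod_def)
  show "(1, 0) \<in> interval_ea nonneg_quadrant (1, 1)" "(0, 1) \<in> interval_ea nonneg_quadrant (1, 1)"
    by (simp_all add: interval_ea_nonneg_quadrant_iff)
  show "seqop fst (1, 0) (0 :: real, 1 :: real) = 0" "seqop fst (0, 1) (1 :: real, 0 :: real) \<noteq> 0"
    by (simp_all add: seqop_def zero_prod_def)
qed

theorem lemma4p2:
  fixes K :: "'v::real_vector set" and u :: 'v
  assumes cone: "positive_cone K"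
    and uK: "u \<in> K" and u0: "u \<noteq> 0"
    and od: "order_determining K u"
  shows
   "(\<forall>\<alpha> \<beta> a b c. is_state K u \<alpha> \<longrightarrow> is_state K u \<beta> \<longrightarrow>
       a \<in> interval_ea K u \<longrightarrow> b \<in> interval_ea K u \<longrightarrow> c \<in> interval_ea K u \<longrightarrow>
       seqop \<beta> a b \<in> interval_ea K u \<and>
       (\<forall>l::real. 0 \<le> l \<and> l \<le> 1 \<longrightarrow>
          seqop \<beta> a (l *\<^sub>R b + (1 - l) *\<^sub>R c)
            = l *\<^sub>R seqop \<beta> a b + (1 - l) *\<^sub>R seqop \<beta> a c \<and>
          seqop \<beta> (l *\<^sub>R a + (1 - l) *\<^sub>R c) b
            = l *\<^sub>R seqop \<beta> a b + (1 - l) *\<^sub>R seqop \<beta> c b) \<and>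
       (cone_le K (b + c) u \<longrightarrow> seqop \<beta> a (b + c) = seqop \<beta> a b + seqop \<beta> a c) \<and>
       (cone_le K (a + c) u \<longrightarrow> seqop \<beta> (a + c) b = seqop \<beta> a b + seqop \<beta> c b) \<and>
       seqop \<beta> 0 b = 0 \<and> seqop \<beta> b 0 = 0 \<and>
       seqop \<beta> a u = a \<and> seqop \<beta> u b = \<beta> b *\<^sub>R u \<and>
       (seqop \<beta> u b = b \<longleftrightarrow> (\<exists>l::real. 0 \<le> l \<and> l \<le> 1 \<and> b = l *\<^sub>R u)) \<and>
       cone_le K (seqop \<beta> a b) a \<and>
       seqop \<alpha> a (seqop \<beta> b c) = seqop \<beta> (seqop \<alpha> a b) c)
    \<and>
    (\<exists>(K'::(real \<times> real) set) u' \<alpha> a b.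
       positive_cone K' \<and> u' \<in> K' \<and> u' \<noteq> 0 \<and> order_determining K' u' \<and>
       is_state K' u' \<alpha> \<and> a \<in> interval_ea K' u' \<and> b \<in> interval_ea K' u' \<and>
       seqop \<alpha> a b = 0 \<and> seqop \<alpha> b a \<noteq> 0)"
  using seqop_eq_zero_not_symmetric
    seqop_in_interval_ea[OF cone] seqop_convex_right[OF cone] seqop_add_right
    seqop_zero_right[OF cone uK] seqop_unit_right seqop_unit_left_eq_iff[OF cone uK]
    seqop_cone_le_left[OF cone] seqop_assoc[OF cone]
  by (auto simp: seqop_add_left seqop_scaleR_left seqop_zero_left seqop_unit_left[of _ u])

end
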